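(* Let $0\le r\le n$. For each $0\le j\le r$, the operator $K_{rj}$ has order $r$, degree $-j$ and deficiency $r$ relative to $\mathcal P_n$. Conversely, if $L$ is a linear differential operator with polynomial coefficients of order $r$ and deficiency $r$ relative to $\mathcal P_n$ which has a degree $d$, then $d=-j$ for some $0\le j\le r$ and $L=a\,K_{rj}$ for some nonzero real constant $a$.
   Context: $D=d/dx$. For $s\ge0$, $\mathcal P_s$ is the space of real polynomials in $x$ of degree at most $s$, and $\mathcal P_s=\{0\}$ for $s<0$. A linear differential operator with polynomial coefficients is $L=\sum_{i=0}^r a_i(x)D^i$ with $a_i\in\mathbb R[x]$; its order is the largest $i$ with $a_i\ne0$. $L$ has degree $d\in\mathbb Z$ if there are real numbers $c_j$, not all zero, with $L[x^j]=c_jx^{j+d}$ for all $j\in\mathbb N$. $L$ has deficiency $m$ relative to $\mathcal P_n$ if $L(\mathcal P_n)\subset\mathcal P_{n-m}$ but $L(\mathcal P_n)\not\subset\mathcal P_{n-m-1}$. Pochhammer operator: $(a-xD)_k=(-1)^k(xD-a)(xD-(a-1))\cdots(xD-(a-k+1))$. For $0\le j\le r\le n$, $K_{rj}=\frac{1}{(r-j)!}(n-j-xD)_{r-j}D^j$. *)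

theory Defs
  imports "HOL-Computational_Algebra.Polynomial"
begin

definition diff_op :: "(nat \<Rightarrow> real poly) \<Rightarrow> nat \<Rightarrow> real poly \<Rightarrow> real poly" where
  "diff_op a r p = (\<Sum>i\<le>r. a i * (pderiv ^^ i) p)"

definition has_order :: "(real poly \<Rightarrow> real poly) \<Rightarrow> nat \<Rightarrow> bool" where
  "has_order L r \<longleftrightarrow> (\<exists>a. a r \<noteq> 0 \<and> L = diff_op a r)"

text \<open>L has degree d: L[x^j] = c_j x^(j+d) for all j, c not identically zero
  (c_j must vanish when j + d < 0, since then x^(j+d) is not a polynomial).\<close>
definition has_degree :: "(real poly \<Rightarrow> real poly) \<Rightarrow> int \<Rightarrow> bool" where
  "has_degree L d \<longleftrightarrow> (\<exists>c :: nat \<Rightarrow> real. (\<exists>j. c j \<noteq> 0) \<and>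
      (\<forall>j. (c j \<noteq> 0 \<longrightarrow> int j + d \<ge> 0) \<and>
           L (monom 1 j) = monom (c j) (nat (int j + d))))"

definition Pspace :: "int \<Rightarrow> real poly set" where
  "Pspace s = (if s < 0 then {0} else {p. int (degree p) \<le> s})"

definition deficiency :: "(real poly \<Rightarrow> real poly) \<Rightarrow> nat \<Rightarrow> int \<Rightarrow> bool" where
  "deficiency L n m \<longleftrightarrow> L ` Pspace (int n) \<subseteq> Pspace (int n - m) \<and>
      \<not> (L ` Pspace (int n) \<subseteq> Pspace (int n - m - 1))"

definition xD_minus :: "real \<Rightarrow> real poly \<Rightarrow> real poly" where
  "xD_minus c p = pCons 0 (pderiv p) - smult c p"

text \<open>Pochhammer operator (a - xD)_k = (-1)^k (xD - a)(xD - (a-1))...(xD - (a-k+1)).\<close>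
fun poch_op :: "real \<Rightarrow> nat \<Rightarrow> real poly \<Rightarrow> real poly" where
  "poch_op a 0 p = p"
| "poch_op a (Suc k) p = smult (-1) (xD_minus (a - real k) (poch_op a k p))"

definition K_op :: "nat \<Rightarrow> nat \<Rightarrow> nat \<Rightarrow> real poly \<Rightarrow> real poly" where
  "K_op n r j p = smult (1 / fact (r - j)) (poch_op (real n - real j) (r - j) ((pderiv ^^ j) p))"

end

theory Submission
  imports Defs
begin

(* A differential operator L = \<Sum> a_i D^i of order r having degree d must have coefficients
  a_i = \<beta>_i x^(i+d) (by induction on i, testing L on x^i), so it acts by
  x^m \<mapsto> \<sigma>(m) x^(m+d) with the symbol \<sigma>(m) = \<Sum> \<beta>_i m(m-1)...(m-i+1), a polynomial of degree r.
  The symbol vanishes at every natural m with m + d < 0, and the deficiency condition makes it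
  vanish at every m \<le> n with m + d > n - r. Counting roots of \<sigma> gives -r \<le> d \<le> 0, and for
  d = -j the r roots 0, ..., j-1, n-r+j+1, ..., n determine \<sigma> up to a scalar: it is the symbol
  m(m-1)...(m-j+1) (n-m)...(n-m-r+j+1) / (r-j)! of K_rj. Conversely, expanding this symbol in the
  falling factorial basis exhibits K_rj as a differential operator of order r. *)

section \<open>Falling factorials\<close>

definition falling_fact :: "real \<Rightarrow> nat \<Rightarrow> real" where
  "falling_fact x i = (\<Prod>k<i. x - real k)"

definition falling_fact_poly :: "nat \<Rightarrow> real poly" where
  "falling_fact_poly i = (\<Prod>k<i. [:- real k, 1:])"

lemma falling_fact_0 [simp]: "falling_fact x 0 = 1"
  by (simp add: falling_fact_def)

lemma falling_fact_Suc: "falling_fact x (Suc i) = falling_fact x i * (x - real i)"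
  by (simp add: falling_fact_def)

lemma falling_fact_of_nat_eq_0_iff: "falling_fact (real m) i = 0 \<longleftrightarrow> m < i"
  by (auto simp: falling_fact_def intro: bexI[of _ m])

lemma falling_fact_of_nat_eq_0: "m < i \<Longrightarrow> falling_fact (real m) i = 0"
  by (simp add: falling_fact_of_nat_eq_0_iff)

lemma falling_fact_neg: "x < 0 \<Longrightarrow> falling_fact x i \<noteq> 0"
  by (auto simp: falling_fact_def)

lemma poly_falling_fact_poly [simp]: "poly (falling_fact_poly i) x = falling_fact x i"
  by (simp add: falling_fact_poly_def falling_fact_def poly_prod)

lemma degree_falling_fact_poly [simp]: "degree (falling_fact_poly i) = i"
  unfolding falling_fact_poly_def by (subst degree_prod_sum_eq) auto

lemma lead_coeff_falling_fact_poly [simp]: "coeff (falling_fact_poly i) i = 1"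
  using lead_coeff_prod[of "\<lambda>k. [:- real k, 1:]" "{..<i}"] degree_falling_fact_poly[of i]
  by (simp add: falling_fact_poly_def)

lemma falling_fact_poly_neq_0 [simp]: "falling_fact_poly i \<noteq> 0"
  using lead_coeff_falling_fact_poly[of i] by (metis coeff_0 zero_neq_one)

lemma higher_pderiv_monom_falling_fact:
  "(pderiv ^^ i) (monom c m) = monom (falling_fact (real m) i * c) (m - i)"
proof (induction i)
  case (Suc i)
  show ?case
  proof (cases "i < m")
    case True
    then show ?thesis
      by (simp add: Suc pderiv_monom falling_fact_Suc of_nat_diff algebra_simps)
  next
    case False
    then have "falling_fact (real m) (Suc i) = 0"
      by (simp add: falling_fact_of_nat_eq_0_iff)
    with False show ?thesis
      by (simp add: Suc pderiv_monom falling_fact_Suc)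
  qed
qed simp

lemma falling_fact_expansion:
  assumes "degree P \<le> r"
  shows "\<exists>b. (\<forall>x. poly P x = (\<Sum>i\<le>r. b i * falling_fact x i)) \<and> b r = coeff P r"
  using assms
proof (induction r arbitrary: P)
  case 0
  then obtain c where "P = [:c:]"
    by (metis degree_eq_zeroE le_zero_eq)
  then show ?case
    by (intro exI[of _ "\<lambda>_. c"]) simp
next
  case (Suc r)
  define Q where "Q = P - smult (coeff P (Suc r)) (falling_fact_poly (Suc r))"
  have "degree Q \<le> r"
  proof (rule degree_le, intro allI impI)
    fix i assume "r < i"
    then show "coeff Q i = 0"
      using Suc.prems by (cases "i = Suc r") (simp_all add: Q_def coeff_eq_0)
  qed
  then obtain b where b: "\<And>x. poly Q x = (\<Sum>i\<le>r. b i * falling_fact x i)"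
    using Suc.IH by blast
  have "poly P x = (\<Sum>i\<le>Suc r. (b(Suc r := coeff P (Suc r))) i * falling_fact x i)" for x
  proof -
    have "poly P x = poly Q x + coeff P (Suc r) * falling_fact x (Suc r)"
      by (simp add: Q_def)
    then show ?thesis
      by (simp add: b)
  qed
  then show ?case
    by (intro exI[of _ "b(Suc r := coeff P (Suc r))"]) simp
qed

lemma falling_fact_expansion_eq_0:
  assumes "\<And>m. m < j \<Longrightarrow> (\<Sum>i\<le>r. b i * falling_fact (real m) i) = 0"
  shows "i < j \<Longrightarrow> i \<le> r \<Longrightarrow> b i = 0"
proof (induction i rule: less_induct)
  case (less i)
  have "(\<Sum>k\<le>r. b k * falling_fact (real i) k) = (\<Sum>k\<in>{i}. b k * falling_fact (real i) k)"
  proof (rule sum.mono_neutral_right)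
    show "\<forall>k\<in>{..r} - {i}. b k * falling_fact (real i) k = 0"
      using less by (auto simp: falling_fact_of_nat_eq_0_iff)
  qed (use less.prems in auto)
  then have "b i * falling_fact (real i) i = 0"
    using assms less.prems by simp
  then show ?case
    by (simp add: falling_fact_of_nat_eq_0_iff)
qed

section \<open>Linear maps on polynomials\<close>

lemma Pspace_iff_coeff: "p \<in> Pspace s \<longleftrightarrow> (\<forall>k. s < int k \<longrightarrow> coeff p k = 0)"
proof (cases "s < 0")
  case True
  then show ?thesis
    by (auto simp: Pspace_def poly_eq_iff)
next
  case False
  have "degree p \<le> nat s" if "\<forall>k. s < int k \<longrightarrow> coeff p k = 0"
    using that False by (intro degree_le) auto
  with False show ?thesis
    by (auto simp: Pspace_def intro: coeff_eq_0)
qed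

lemma Pspace_sum_smult:
  assumes "\<And>m. m \<in> A \<Longrightarrow> p m \<in> Pspace s"
  shows "(\<Sum>m\<in>A. smult (c m) (p m)) \<in> Pspace s"
  using assms by (simp add: Pspace_iff_coeff coeff_sum)

lemma monom_in_Pspace_iff: "monom c k \<in> Pspace s \<longleftrightarrow> c = 0 \<or> int k \<le> s"
  by (auto simp: Pspace_iff_coeff coeff_monom)

definition poly_linear :: "(real poly \<Rightarrow> real poly) \<Rightarrow> bool" where
  "poly_linear L \<longleftrightarrow> (\<forall>p q. L (p + q) = L p + L q) \<and> (\<forall>c p. L (smult c p) = smult c (L p))"

lemma poly_linear_0:
  assumes "poly_linear L"
  shows "L 0 = 0"
  using assms unfolding poly_linear_def by (metis smult_0_left)

lemma poly_linear_monom_expansion: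
  assumes "poly_linear L"
  shows "L p = (\<Sum>m\<le>degree p. smult (coeff p m) (L (monom 1 m)))"
proof -
  have "L (\<Sum>m\<in>A. smult (coeff p m) (monom 1 m)) = (\<Sum>m\<in>A. smult (coeff p m) (L (monom 1 m)))"
    if "finite A" for A
    using that assms by (induction A rule: finite_induct) (auto simp: poly_linear_def poly_linear_0)
  moreover have "p = (\<Sum>m\<le>degree p. smult (coeff p m) (monom 1 m))"
    by (simp add: smult_monom poly_as_sum_of_monoms)
  ultimately show ?thesis
    by (metis finite_atMost)
qed

lemma poly_linear_eqI:
  assumes "poly_linear L" "poly_linear M" "\<And>m. L (monom 1 m) = M (monom 1 m)"
  shows "L = M"
proof
  fix p
  show "L p = M p"
    using poly_linear_monom_expansion[OF assms(1), of p]
      poly_linear_monom_expansion[OF assms(2), of p]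
    by (simp add: assms(3))
qed

lemma poly_linear_image_Pspace_subset_iff:
  assumes "poly_linear L"
  shows "L ` Pspace (int n) \<subseteq> Pspace s \<longleftrightarrow> (\<forall>m\<le>n. L (monom 1 m) \<in> Pspace s)"
proof
  assume "L ` Pspace (int n) \<subseteq> Pspace s"
  then show "\<forall>m\<le>n. L (monom 1 m) \<in> Pspace s"
    by (auto simp: monom_in_Pspace_iff)
next
  assume monoms: "\<forall>m\<le>n. L (monom 1 m) \<in> Pspace s"
  show "L ` Pspace (int n) \<subseteq> Pspace s"
  proof
    fix q assume "q \<in> L ` Pspace (int n)"
    then obtain p where "degree p \<le> n" "q = L p"
      by (auto simp: Pspace_def)
    then have "q = (\<Sum>m\<le>degree p. smult (coeff p m) (L (monom 1 m)))"
      using assms poly_linear_monom_expansion by blast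
    then show "q \<in> Pspace s"
      using monoms \<open>degree p \<le> n\<close> by (auto intro: Pspace_sum_smult)
  qed
qed

lemma smult_sum_right: "smult c (\<Sum>x\<in>A. f x) = (\<Sum>x\<in>A. smult c (f x))"
  by (induction A rule: infinite_finite_induct) (simp_all add: smult_add_right)

lemma poly_linear_diff_op: "poly_linear (diff_op a r)"
  by (simp add: poly_linear_def diff_op_def higher_pderiv_add higher_pderiv_smult
      distrib_left sum.distrib smult_sum_right)

lemma poly_linear_smult: "poly_linear L \<Longrightarrow> poly_linear (\<lambda>p. smult c (L p))"
  by (simp add: poly_linear_def smult_add_right mult.commute)

lemma poly_linear_xD_minus: "poly_linear (xD_minus c)"
  by (simp add: poly_linear_def xD_minus_def pderiv_add pderiv_smult smult_add_right
      smult_diff_right algebra_simps)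

lemma poly_linear_poch_op: "poly_linear (poch_op a k)"
  by (induction k) (auto simp: poly_linear_def poly_linear_xD_minus[unfolded poly_linear_def]
      smult_add_right)

lemma poly_linear_K_op: "poly_linear (K_op n r j)"
  using poly_linear_poch_op[of "real n - real j" "r - j"]
  by (simp add: poly_linear_def K_op_def higher_pderiv_add higher_pderiv_smult smult_add_right)

section \<open>Differential operators of a given degree\<close>

lemma monom_mult_higher_pderiv_monom:
  assumes "int i + d < 0 \<Longrightarrow> \<beta> = 0"
  shows "monom \<beta> (nat (int i + d)) * (pderiv ^^ i) (monom 1 m)
           = monom (\<beta> * falling_fact (real m) i) (nat (int m + d))"
proof (cases "\<beta> = 0 \<or> m < i")
  case True
  with assms show ?thesis
    by (auto simp: higher_pderiv_monom_falling_fact falling_fact_of_nat_eq_0)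
next
  case False
  with assms have "nat (int i + d) + (m - i) = nat (int m + d)"
    by force
  then show ?thesis
    by (simp add: higher_pderiv_monom_falling_fact mult_monom)
qed

lemma diff_op_monom_homogeneous:
  assumes "\<And>i. i \<le> r \<Longrightarrow> a i = monom (\<beta> i) (nat (int i + d))"
    and "\<And>i. i \<le> r \<Longrightarrow> int i + d < 0 \<Longrightarrow> \<beta> i = 0"
  shows "diff_op a r (monom 1 m)
           = monom (\<Sum>i\<le>r. \<beta> i * falling_fact (real m) i) (nat (int m + d))"
  unfolding diff_op_def monom_sum
  by (rule sum.cong) (simp_all add: assms monom_mult_higher_pderiv_monom)

lemma diff_op_degree_coeff_monom:
  assumes L: "\<And>m. diff_op a r (monom 1 m) = monom (c m) (nat (int m + d))"
    and c: "\<And>m. c m \<noteq> 0 \<Longrightarrow> 0 \<le> int m + d"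
  shows "i \<le> r \<Longrightarrow> \<exists>\<beta>. a i = monom \<beta> (nat (int i + d)) \<and> (int i + d < 0 \<longrightarrow> \<beta> = 0)"
proof (induction i rule: less_induct)
  case (less i)
  define \<beta> where "\<beta> k = coeff (a k) (nat (int k + d))" for k
  have \<beta>: "a k = monom (\<beta> k) (nat (int k + d)) \<and> (int k + d < 0 \<longrightarrow> \<beta> k = 0)" if "k < i" for k
    using less that by (fastforce simp: \<beta>_def)
  define e where "e = nat (int i + d)"
  define S where "S = (\<Sum>k<i. \<beta> k * falling_fact (real i) k)"
  have lower: "(\<Sum>k<i. a k * (pderiv ^^ k) (monom 1 i)) = monom S e"
    unfolding S_def e_def monom_sum
    by (rule sum.cong) (simp_all add: \<beta> monom_mult_higher_pderiv_monom)
  have "monom (c i) e = diff_op a r (monom 1 i)"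
    by (simp add: L e_def)
  also have "\<dots> = (\<Sum>k<Suc i. a k * (pderiv ^^ k) (monom 1 i))"
    unfolding diff_op_def
    by (rule sum.mono_neutral_right)
       (use less.prems in \<open>auto simp: higher_pderiv_monom_falling_fact falling_fact_of_nat_eq_0\<close>)
  also have "\<dots> = monom S e + smult (falling_fact (real i) i) (a i)"
    unfolding sum.lessThan_Suc lower by (simp add: higher_pderiv_monom_falling_fact monom_0)
  finally have "smult (falling_fact (real i) i) (a i) = monom (c i - S) e"
    by (simp add: diff_monom[symmetric] algebra_simps)
  then have "smult (1 / falling_fact (real i) i) (smult (falling_fact (real i) i) (a i))
      = monom ((c i - S) / falling_fact (real i) i) e"
    by (simp add: smult_monom)
  then have ai: "a i = monom ((c i - S) / falling_fact (real i) i) e"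
    by (simp add: falling_fact_of_nat_eq_0_iff)
  have "c i - S = 0" if "int i + d < 0"
    using that c[of i] \<beta> by (auto simp: S_def intro!: sum.neutral)
  with ai show ?case
    by (auto simp: e_def)
qed

lemma diff_op_degree_symbol:
  assumes "a r \<noteq> 0"
    and L: "\<And>m. diff_op a r (monom 1 m) = monom (c m) (nat (int m + d))"
    and c: "\<And>m. c m \<noteq> 0 \<Longrightarrow> 0 \<le> int m + d"
  obtains P where "degree P = r" "P \<noteq> 0" "\<And>m. c m = poly P (real m)"
proof -
  define \<beta> where "\<beta> i = coeff (a i) (nat (int i + d))" for i
  have \<beta>: "a i = monom (\<beta> i) (nat (int i + d)) \<and> (int i + d < 0 \<longrightarrow> \<beta> i = 0)" if "i \<le> r" for i
    using diff_op_degree_coeff_monom[OF L c that] by (fastforce simp: \<beta>_def)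
  define P where "P = (\<Sum>i\<le>r. smult (\<beta> i) (falling_fact_poly i))"
  have "monom (c m) (nat (int m + d)) = monom (poly P (real m)) (nat (int m + d))" for m
    unfolding L[symmetric] P_def poly_sum
    by (simp add: \<beta> diff_op_monom_homogeneous[of r a \<beta> d])
  then have cP: "c m = poly P (real m)" for m
    by simp
  have "coeff P r = \<beta> r"
    unfolding P_def coeff_sum
    by (subst sum.remove[of _ r]) (auto simp: coeff_eq_0 intro!: sum.neutral)
  moreover have "\<beta> r \<noteq> 0"
    using \<beta>[of r] \<open>a r \<noteq> 0\<close> by auto
  moreover have "degree P \<le> r"
    unfolding P_def by (intro degree_sum_le order.trans[OF degree_smult_le]) auto
  ultimately have "degree P = r" "P \<noteq> 0"
    using le_degree[of P r] by auto
  with cP show thesis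
    using that by blast
qed

section \<open>The operators \<open>K\<^sub>r\<^sub>j\<close>\<close>

lemma coeff_xD_minus: "coeff (xD_minus c p) k = (real k - c) * coeff p k"
  by (cases k) (simp_all add: xD_minus_def coeff_pderiv algebra_simps)

lemma xD_minus_monom: "xD_minus c (monom b t) = monom ((real t - c) * b) t"
  by (rule poly_eqI) (simp add: coeff_xD_minus coeff_monom)

lemma poch_op_monom: "poch_op a k (monom b t) = monom (falling_fact (a - real t) k * b) t"
  by (induction k) (simp_all add: xD_minus_monom smult_monom falling_fact_Suc algebra_simps)

definition K_symbol :: "nat \<Rightarrow> nat \<Rightarrow> nat \<Rightarrow> real poly" where
  "K_symbol n r j = smult (1 / fact (r - j))
     (falling_fact_poly j * pcompose (falling_fact_poly (r - j)) [:real n, -1:])"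

lemma poly_K_symbol:
  "poly (K_symbol n r j) x = falling_fact x j * falling_fact (real n - x) (r - j) / fact (r - j)"
  by (simp add: K_symbol_def poly_pcompose)

lemma K_op_monom: "K_op n r j (monom 1 m) = monom (poly (K_symbol n r j) (real m)) (m - j)"
proof (cases "m < j")
  case True
  then show ?thesis
    by (simp add: K_op_def poly_K_symbol higher_pderiv_monom_falling_fact falling_fact_of_nat_eq_0
        poly_linear_0[OF poly_linear_poch_op])
next
  case False
  then have "real n - real j - real (m - j) = real n - real m"
    by (simp add: of_nat_diff)
  then have "K_op n r j (monom 1 m) = monom
      (falling_fact (real n - real m) (r - j) * falling_fact (real m) j / fact (r - j)) (m - j)"
    by (simp add: K_op_def higher_pderiv_monom_falling_fact poch_op_monom smult_monom)
  then show ?thesis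
    by (simp add: poly_K_symbol mult.commute)
qed

lemma degree_K_symbol:
  assumes "j \<le> r"
  shows "degree (K_symbol n r j) = r"
proof -
  let ?Q = "pcompose (falling_fact_poly (r - j)) [:real n, -1:]"
  have "?Q \<noteq> 0"
    by (subst pcompose_eq_0_iff) simp_all
  moreover have "degree ?Q = r - j"
    by (simp add: degree_pcompose)
  ultimately show ?thesis
    using assms by (simp add: K_symbol_def degree_mult_eq)
qed

lemma lead_coeff_K_symbol:
  assumes "j \<le> r"
  shows "coeff (K_symbol n r j) r = (-1) ^ (r - j) / fact (r - j)"
proof -
  have "lead_coeff (K_symbol n r j) = (-1) ^ (r - j) / fact (r - j)"
    by (simp add: K_symbol_def lead_coeff_mult lead_coeff_comp)
  with degree_K_symbol[OF assms] show ?thesis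
    by simp
qed

lemma K_symbol_of_nat_eq_0_iff:
  assumes "j \<le> r" "r \<le> n"
  shows "poly (K_symbol n r j) (real m) = 0 \<longleftrightarrow> m < j \<or> n - r + j < m \<and> m \<le> n"
proof (cases "m \<le> n")
  case True
  then have "falling_fact (real n - real m) (r - j) = 0 \<longleftrightarrow> n - m < r - j"
    using falling_fact_of_nat_eq_0_iff[of "n - m" "r - j"] by (simp add: of_nat_diff)
  then have "poly (K_symbol n r j) (real m) = 0 \<longleftrightarrow> m < j \<or> n - m < r - j"
    by (simp add: poly_K_symbol falling_fact_of_nat_eq_0_iff)
  moreover have "n - m < r - j \<longleftrightarrow> n - r + j < m"
    using True assms by linarith
  ultimately show ?thesis
    using True by simp
next
  case False
  then have "falling_fact (real m) j \<noteq> 0" "falling_fact (real n - real m) (r - j) \<noteq> 0"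
    using assms by (simp_all add: falling_fact_of_nat_eq_0_iff falling_fact_neg)
  with False assms show ?thesis
    by (simp add: poly_K_symbol)
qed

lemma diff_op_of_symbol:
  assumes "degree P \<le> r" "\<And>m. m < j \<Longrightarrow> poly P (real m) = 0"
  obtains a where "a r = monom (coeff P r) (r - j)"
    "\<And>m. diff_op a r (monom 1 m) = monom (poly P (real m)) (m - j)"
proof -
  obtain b where b: "\<And>x. poly P x = (\<Sum>i\<le>r. b i * falling_fact x i)" "b r = coeff P r"
    using falling_fact_expansion[OF assms(1)] by blast
  have b0: "b i = 0" if "i < j" "i \<le> r" for i
    using falling_fact_expansion_eq_0[where j = j and r = r and b = b] that assms(2)
    by (simp add: b(1)[symmetric])
  define a where "a i = monom (b i) (i - j)" for i
  have "diff_op a r (monom 1 m) = monom (poly P (real m)) (nat (int m + - int j))" for m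
    unfolding b(1) by (rule diff_op_monom_homogeneous) (auto simp: a_def b0 nat_diff_distrib')
  then show thesis
    using that[of a] by (simp add: a_def b(2) nat_diff_distrib')
qed

lemma K_op_has_order:
  assumes "j \<le> r"
  shows "has_order (K_op n r j) r"
proof -
  obtain a where ar: "a r = monom (coeff (K_symbol n r j) r) (r - j)"
    and a: "\<And>m. diff_op a r (monom 1 m) = monom (poly (K_symbol n r j) (real m)) (m - j)"
    using diff_op_of_symbol[of "K_symbol n r j" r j] assms
    by (auto simp: degree_K_symbol poly_K_symbol falling_fact_of_nat_eq_0)
  have "K_op n r j = diff_op a r"
    by (rule poly_linear_eqI) (simp_all add: poly_linear_K_op poly_linear_diff_op K_op_monom a)
  moreover have "a r \<noteq> 0"
    using ar assms by (simp add: lead_coeff_K_symbol)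
  ultimately show ?thesis
    unfolding has_order_def by blast
qed

lemma K_op_has_degree:
  assumes "j \<le> r" "r \<le> n"
  shows "has_degree (K_op n r j) (- int j)"
  unfolding has_degree_def
proof (intro exI[of _ "\<lambda>m. poly (K_symbol n r j) (real m)"] conjI allI)
  show "\<exists>m. poly (K_symbol n r j) (real m) \<noteq> 0"
    using K_symbol_of_nat_eq_0_iff[OF assms, of j] by auto
  fix m
  show "poly (K_symbol n r j) (real m) \<noteq> 0 \<longrightarrow> 0 \<le> int m + - int j"
    using K_symbol_of_nat_eq_0_iff[OF assms, of m] by auto
  show "K_op n r j (monom 1 m) = monom (poly (K_symbol n r j) (real m)) (nat (int m + - int j))"
    by (simp add: K_op_monom nat_diff_distrib')
qed

lemma K_op_deficiency:
  assumes "j \<le> r" "r \<le> n"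
  shows "deficiency (K_op n r j) n (int r)"
proof -
  have "\<forall>m\<le>n. K_op n r j (monom 1 m) \<in> Pspace (int n - int r)"
  proof (intro allI impI)
    fix m assume "m \<le> n"
    then have "poly (K_symbol n r j) (real m) = 0 \<or> m - j \<le> n - r"
      using K_symbol_of_nat_eq_0_iff[OF assms, of m] by auto
    then show "K_op n r j (monom 1 m) \<in> Pspace (int n - int r)"
      using assms by (auto simp: K_op_monom monom_in_Pspace_iff)
  qed
  moreover have "K_op n r j (monom 1 (n - r + j)) \<notin> Pspace (int n - int r - 1)"
    using K_symbol_of_nat_eq_0_iff[OF assms, of "n - r + j"] assms
    by (simp add: K_op_monom monom_in_Pspace_iff)
  moreover have "n - r + j \<le> n"
    using assms by simp
  ultimately show ?thesis
    unfolding deficiency_def poly_linear_image_Pspace_subset_iff[OF poly_linear_K_op] by blast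
qed

section \<open>Uniqueness\<close>

lemma symbol_eq_smult_K_symbol:
  fixes P :: "real poly"
  assumes rn: "r \<le> n" and P: "degree P = r" "P \<noteq> 0"
    and low: "\<And>m. int m + d < 0 \<Longrightarrow> poly P (real m) = 0"
    and high: "\<And>m. m \<le> n \<Longrightarrow> int n - int r < int m + d \<Longrightarrow> poly P (real m) = 0"
  obtains j \<alpha> where "j \<le> r" "d = - int j" "\<alpha> \<noteq> 0" "P = smult \<alpha> (K_symbol n r j)"
proof -
  have few_roots: "card A \<le> r" if "finite A" "\<And>m. m \<in> A \<Longrightarrow> poly P (real m) = 0" for A
  proof (rule ccontr)
    assume "\<not> card A \<le> r"
    then have "P = 0"
      using that P by (intro poly_eqI_degree[of "real ` A"]) (auto simp: card_image)
    with P show False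
      by simp
  qed
  have "d \<le> 0"
  proof (rule ccontr)
    assume "\<not> d \<le> 0"
    then have "card {n - r..n} \<le> r"
      using high rn by (intro few_roots) auto
    with rn show False
      by simp
  qed
  moreover have "0 \<le> int r + d"
  proof (rule ccontr)
    assume "\<not> 0 \<le> int r + d"
    then have "card {..r} \<le> r"
      using low by (intro few_roots) auto
    then show False
      by simp
  qed
  ultimately obtain j where j: "j \<le> r" "d = - int j"
    by (intro that[of "nat (- d)"]) auto
  define A where "A = {..<j} \<union> {n - r + j<..n}"
  have "card A = card {..<j} + card {n - r + j<..n}"
    unfolding A_def by (rule card_Un_disjoint) auto
  with j rn have "card A = r"
    by simp
  have roots: "poly P (real m) = 0 \<and> poly (K_symbol n r j) (real m) = 0" if "m \<in> A" for m
  proof -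
    have "m < j \<or> n - r + j < m \<and> m \<le> n"
      using that by (simp add: A_def)
    then show ?thesis
      using j rn low high[of m] K_symbol_of_nat_eq_0_iff[OF j(1) rn, of m] by auto
  qed
  define \<alpha> where "\<alpha> = coeff P r / coeff (K_symbol n r j) r"
  have "P = smult \<alpha> (K_symbol n r j)"
  proof (rule poly_eqI_degree_lead_coeff[where n = r and A = "real ` A"])
    show "coeff P r = coeff (smult \<alpha> (K_symbol n r j)) r"
      using j by (simp add: \<alpha>_def lead_coeff_K_symbol)
  qed (use \<open>card A = r\<close> P j roots in \<open>auto simp: card_image degree_K_symbol\<close>)
  moreover have "\<alpha> \<noteq> 0"
    using P j leading_coeff_0_iff[of P] by (simp add: \<alpha>_def lead_coeff_K_symbol)
  ultimately show thesis
    using that j by blast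
qed

lemma smult_K_op_if_degree_deficiency:
  assumes rn: "r \<le> n"
    and L: "has_order L r" "deficiency L n (int r)" "has_degree L d"
  shows "\<exists>j\<le>r. d = - int j \<and> (\<exists>\<alpha>. \<alpha> \<noteq> 0 \<and> L = (\<lambda>p. smult \<alpha> (K_op n r j p)))"
proof -
  obtain a where "a r \<noteq> 0" and La: "L = diff_op a r"
    using L(1) by (auto simp: has_order_def)
  obtain c where c: "\<And>m. c m \<noteq> 0 \<Longrightarrow> 0 \<le> int m + d"
    and Lc: "\<And>m. L (monom 1 m) = monom (c m) (nat (int m + d))"
    using L(3) by (auto simp: has_degree_def)
  obtain P where P: "degree P = r" "P \<noteq> 0" and cP: "\<And>m. c m = poly P (real m)"
    using diff_op_degree_symbol[of a r c d] \<open>a r \<noteq> 0\<close> Lc c unfolding La by blast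
  have vanish_high: "poly P (real m) = 0" if "m \<le> n" "int n - int r < int m + d" for m
  proof -
    have "monom 1 m \<in> Pspace (int n)"
      using \<open>m \<le> n\<close> by (simp add: monom_in_Pspace_iff)
    then have "L (monom 1 m) \<in> Pspace (int n - int r)"
      using L(2) unfolding deficiency_def by blast
    with that rn show ?thesis
      by (auto simp: Lc cP monom_in_Pspace_iff)
  qed
  have vanish_low: "poly P (real m) = 0" if "int m + d < 0" for m
    using c[of m] that by (auto simp: cP)
  obtain j \<alpha> where j: "j \<le> r" "d = - int j" and "\<alpha> \<noteq> 0"
    and P_K: "P = smult \<alpha> (K_symbol n r j)"
    using symbol_eq_smult_K_symbol[OF rn P vanish_low vanish_high] by blast
  have "L = (\<lambda>p. smult \<alpha> (K_op n r j p))"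
  proof (rule poly_linear_eqI)
    show "poly_linear L" "poly_linear (\<lambda>p. smult \<alpha> (K_op n r j p))"
      by (simp_all add: La poly_linear_diff_op poly_linear_smult poly_linear_K_op)
    show "L (monom 1 m) = smult \<alpha> (K_op n r j (monom 1 m))" for m
      using j by (simp add: Lc cP P_K K_op_monom smult_monom nat_diff_distrib')
  qed
  with j \<open>\<alpha> \<noteq> 0\<close> show ?thesis
    by blast
qed

theorem mainTheorem13:
  fixes n r :: nat
  assumes "r \<le> n"
  shows "(\<forall>j\<le>r. has_order (K_op n r j) r \<and> has_degree (K_op n r j) (- int j)
                 \<and> deficiency (K_op n r j) n (int r))
       \<and> (\<forall>(L :: real poly \<Rightarrow> real poly) (d :: int).
            has_order L r \<and> deficiency L n (int r) \<and> has_degree L d \<longrightarrow>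
            (\<exists>j\<le>r. d = - int j \<and> (\<exists>a :: real. a \<noteq> 0 \<and> L = (\<lambda>p. smult a (K_op n r j p)))))"
proof (intro conjI allI impI)
  fix j assume "j \<le> r"
  with assms show "has_order (K_op n r j) r" "has_degree (K_op n r j) (- int j)"
    "deficiency (K_op n r j) n (int r)"
    by (simp_all add: K_op_has_order K_op_has_degree K_op_deficiency)
next
  fix L d assume "has_order L r \<and> deficiency L n (int r) \<and> has_degree L d"
  with assms show "\<exists>j\<le>r. d = - int j \<and> (\<exists>a. a \<noteq> 0 \<and> L = (\<lambda>p. smult a (K_op n r j p)))"
    by (intro smult_K_op_if_degree_deficiency) simp_all
qed

end
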